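(* Consider the system $$\frac{df}{dt}= r\alpha f m(1-f-m)-(1+h)f,\qquad \frac{dm}{dt}=(1-r)\alpha f m(1-f-m)+(s-1)m,$$ with $0<r<1$, $\alpha>0$, $h\ge0$, $0\le s<1$, and treat $s$ as a bifurcation parameter. Let $\mu=\frac{(1-r)(1+h)}{r(1-s)}$, $s^*=\frac{1}{r}+\frac{1-r}{4}\big(\frac{4h}{r}-\alpha\big)$, $h_*=\frac{r}{4}\big(\alpha-\frac{4}{r(1-r)}\big)$, $h^*=\frac{r}{4}\big(\alpha-\frac{4}{r}\big)$. If $h_*<h<h^*$, then at $s=s^*$ the two interior equilibria coincide at $E^*=\big(\frac{1}{2(1+\mu)},\frac{\mu}{2(1+\mu)}\big)$, where the Jacobian has a simple zero eigenvalue, and the system undergoes a saddle-node bifurcation at $E^*$ as $s$ crosses $s^*$: there are two interior equilibria for $s$ slightly larger than $s^*$ and none for $s<s^*$, so that as $s$ is decreased through $s^*$ the invasive population is eliminated (all solutions tend to $(0,0)$ after the interior equilibria disappear).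
   Context: Nondimensionalized FHMS mating model without Allee effect ($f,m$ scaled female/male densities, $r$ primary sex ratio, $h$ scaled female harvesting rate, $s$ scaled male stocking rate). Interior equilibria are equilibria with $f>0,m>0$; they lie on the line $m=\mu f$. *)

theory Defs
  imports "HOL-Analysis.Derivative" "Jordan_Normal_Form.Char_Poly"
begin

text \<open>Vector field of the nondimensionalized FHMS model (no Allee effect).
  Parameters: r (primary sex ratio), alpha, h (female harvesting), s (male stocking).\<close>
definition fhms_field :: "real \<Rightarrow> real \<Rightarrow> real \<Rightarrow> real \<Rightarrow> real \<times> real \<Rightarrow> real \<times> real" where
  "fhms_field r \<alpha> h s = (\<lambda>(f, m).
     (r * \<alpha> * f * m * (1 - f - m) - (1 + h) * f,
      (1 - r) * \<alpha> * f * m * (1 - f - m) + (s - 1) * m))"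

definition interior_equilibria :: "real \<Rightarrow> real \<Rightarrow> real \<Rightarrow> real \<Rightarrow> (real \<times> real) set" where
  "interior_equilibria r \<alpha> h s =
     {(f, m). f > 0 \<and> m > 0 \<and> fhms_field r \<alpha> h s (f, m) = (0, 0)}"

definition fhms_jacobian :: "real \<Rightarrow> real \<Rightarrow> real \<Rightarrow> real \<Rightarrow> real \<times> real \<Rightarrow> real mat" where
  "fhms_jacobian r \<alpha> h s p = mat 2 2 (\<lambda>(i, j).
     (let comp = (if i = 0 then fst else snd) in
      if j = 0 then deriv (\<lambda>x. comp (fhms_field r \<alpha> h s (x, snd p))) (fst p)
      else deriv (\<lambda>y. comp (fhms_field r \<alpha> h s (fst p, y))) (snd p)))"

end

theory Submission
  imports Defs "HOL-Analysis.Analysis" "HOL-Real_Asymp.Real_Asymp"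
begin

text \<open>Writing \<open>g = 1 - f - m\<close>, an interior equilibrium satisfies \<open>r \<alpha> m g = 1 + h\<close> and
  \<open>(1 - r) \<alpha> f g = 1 - s\<close>, so \<open>g\<close> is a positive root of \<open>g\<^sup>2 - g + P\<close> with
  \<open>P = (1 + h)/(r \<alpha>) + (1 - s)/((1 - r) \<alpha>)\<close>, and every such root yields an equilibrium.
  The discriminant \<open>1 - 4 P\<close> equals \<open>4 (s - s\<^sup>*)/((1 - r) \<alpha>)\<close>, so there are no, one or two
  interior equilibria according as \<open>s < s\<^sup>*\<close>, \<open>s = s\<^sup>*\<close>, \<open>s > s\<^sup>*\<close>. At the double root
  \<open>g = 1/2\<close> the Jacobian has zero determinant and trace \<open>-\<alpha> f m \<noteq> 0\<close>.

  For \<open>s < s\<^sup>*\<close>, along a nonnegative solution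
  \<open>(ln f)'/r + (ln m)'/(1 - r) = \<alpha> (f + m)(1 - f - m) - (1 + h)/r - (1 - s)/(1 - r)\<close>,
  which is at most \<open>\<alpha>/4 - \<alpha> P < 0\<close>. Since \<open>f + m\<close> stays bounded, the product \<open>f m\<close> decays
  exponentially, and then \<open>f\<close> and \<open>m\<close> obey linear equations with vanishing forcing, so they
  tend to \<open>0\<close>.\<close>

lemma quadratic_no_root:
  fixes P g :: real
  assumes "1 < 4 * P"
  shows "g\<^sup>2 - g + P \<noteq> 0"
proof -
  have "g\<^sup>2 - g + P = (g - 1/2)\<^sup>2 + (P - 1/4)" by (simp add: power2_eq_square algebra_simps)
  moreover have "(g - 1/2)\<^sup>2 \<ge> 0" by simp
  ultimately show ?thesis using assms by linarith
qed

lemma quadratic_double_root: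
  fixes P g :: real
  assumes "4 * P = 1"
  shows "g\<^sup>2 - g + P = 0 \<longleftrightarrow> g = 1/2"
proof -
  have "g\<^sup>2 - g + P = (g - 1/2)\<^sup>2" using assms by (simp add: power2_eq_square algebra_simps)
  then show ?thesis by simp
qed

lemma card_positive_roots_quadratic:
  fixes P :: real
  assumes "0 < P" "4 * P < 1"
  shows "card {g. 0 < g \<and> g\<^sup>2 - g + P = 0} = 2"
proof -
  define q where "q = sqrt (1 - 4 * P)"
  have q: "q\<^sup>2 = 1 - 4 * P" "0 < q" "q < 1"
    using assms real_sqrt_less_iff[of "1 - 4 * P" 1] by (auto simp: q_def)
  have "g\<^sup>2 - g + P = (g - (1 + q)/2) * (g - (1 - q)/2)" for g
    using q(1) by (simp add: power2_eq_square field_simps)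
  then have "{g. 0 < g \<and> g\<^sup>2 - g + P = 0} = {(1 + q)/2, (1 - q)/2}"
    using q by auto
  then show ?thesis using q by simp
qed

lemma sum_le_of_weighted_sum_le:
  fixes a b X Y Z :: real
  assumes "X \<le> 0" "Y \<le> 0" "0 \<le> a" "0 \<le> b" "a * X + b * Y \<le> Z"
  shows "(a + b) * (X + Y) \<le> Z"
proof -
  have "b * X \<le> 0" "a * Y \<le> 0" using assms by (auto simp: mult_nonneg_nonpos)
  then show ?thesis using assms(5) by (simp add: algebra_simps)
qed

lemma has_vector_derivative_fst:
  assumes "(x has_vector_derivative V) F"
  shows "((\<lambda>t. fst (x t)) has_real_derivative fst V) F"
proof -
  have "((\<lambda>t. fst (x t)) has_derivative (\<lambda>h. fst (h *\<^sub>R V))) F"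
    using assms by (intro has_derivative_fst) (simp add: has_vector_derivative_def)
  moreover have "(\<lambda>h. fst (h *\<^sub>R V)) = (*) (fst V)" by (auto simp: mult.commute)
  ultimately show ?thesis by (simp add: has_field_derivative_def)
qed

lemma has_vector_derivative_snd:
  assumes "(x has_vector_derivative V) F"
  shows "((\<lambda>t. snd (x t)) has_real_derivative snd V) F"
proof -
  have "((\<lambda>t. snd (x t)) has_derivative (\<lambda>h. snd (h *\<^sub>R V))) F"
    using assms by (intro has_derivative_snd) (simp add: has_vector_derivative_def)
  moreover have "(\<lambda>h. snd (h *\<^sub>R V)) = (*) (snd V)" by (auto simp: mult.commute)
  ultimately show ?thesis by (simp add: has_field_derivative_def)
qed

lemma continuous_on_integral_atLeast:
  fixes a :: "real \<Rightarrow> real"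
  assumes "continuous_on {0..} a" "0 \<le> t"
  shows "continuous_on {0..t} (\<lambda>u. integral {0..u} a)"
proof -
  have "continuous_on {0..t} a" using assms(1) by (rule continuous_on_subset) auto
  then show ?thesis
    using integral_has_real_derivative DERIV_continuous continuous_on_eq_continuous_within
    by blast
qed

lemma integral_atLeast_has_real_derivative:
  fixes a :: "real \<Rightarrow> real"
  assumes "continuous_on {0..} a" "0 < u"
  shows "((\<lambda>u. integral {0..u} a) has_real_derivative a u) (at u)"
proof -
  have "continuous_on {0..u + 1} a" using assms(1) by (rule continuous_on_subset) auto
  then have "((\<lambda>u. integral {0..u} a) has_real_derivative a u) (at u within {0..u + 1})"
    using assms(2) by (intro integral_has_real_derivative) auto
  moreover have "at u within {0..u + 1} = at u" using assms(2) by (intro at_within_Icc_at) auto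
  ultimately show ?thesis by simp
qed

lemma linear_ode_exp_integral:
  fixes y a :: "real \<Rightarrow> real"
  assumes cont_y: "continuous_on {0..} y" and cont_a: "continuous_on {0..} a"
    and deriv: "\<And>u. 0 < u \<Longrightarrow> (y has_real_derivative y u * a u) (at u)"
    and t: "0 \<le> t"
  shows "y t = y 0 * exp (integral {0..t} a)"
proof -
  define A where "A u = integral {0..u} a" for u
  define \<phi> where "\<phi> u = y u * exp (- A u)" for u
  have "\<phi> t = \<phi> 0"
  proof (cases "t = 0")
    case False
    show ?thesis
    proof (rule DERIV_isconst_end[of 0 t \<phi>])
      show "0 < t" using t False by simp
      show "continuous_on {0..t} \<phi>" unfolding \<phi>_def A_def
        by (intro continuous_intros continuous_on_integral_atLeast[OF cont_a t]
            continuous_on_subset[OF cont_y]) auto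
      show "(\<phi> has_real_derivative 0) (at u)" if "0 < u" "u < t" for u
        using deriv[of u] integral_atLeast_has_real_derivative[OF cont_a, of u] that
        unfolding \<phi>_def A_def
        by (auto intro!: derivative_eq_intros simp: algebra_simps)
    qed
  qed simp
  then show ?thesis by (simp add: \<phi>_def A_def exp_minus field_simps)
qed

lemma upper_bound_invariant:
  fixes \<phi> \<phi>' :: "real \<Rightarrow> real"
  assumes cont: "continuous_on {T..} \<phi>"
    and deriv: "\<And>t. T < t \<Longrightarrow> (\<phi> has_real_derivative \<phi>' t) (at t)"
    and decreasing: "\<And>t. T < t \<Longrightarrow> c < \<phi> t \<Longrightarrow> \<phi>' t < 0"
    and init: "\<phi> T \<le> K" and "c \<le> K" and "T \<le> t"
  shows "\<phi> t \<le> K"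
proof (rule ccontr)
  assume "\<not> \<phi> t \<le> K"
  define S where "S = {T..t} \<inter> \<phi> -` {..K}"
  have "closed S"
    unfolding S_def using \<open>T \<le> t\<close>
    by (intro continuous_closed_preimage continuous_on_subset[OF cont]) auto
  moreover have "T \<in> S" "bdd_above S" using init \<open>T \<le> t\<close> by (auto simp: S_def)
  ultimately have "Sup S \<in> S" using closed_contains_Sup by blast
  then have \<tau>: "T \<le> Sup S" "Sup S \<le> t" "\<phi> (Sup S) \<le> K" by (auto simp: S_def)
  \<comment> \<open>after the last time \<open>Sup S\<close> below level \<open>K\<close>, \<open>\<phi>\<close> stays above \<open>K\<close> but cannot increase\<close>
  have above: "K < \<phi> u" if "Sup S < u" "u \<le> t" for u
    using cSup_upper[OF _ \<open>bdd_above S\<close>, of u] that \<tau> by (force simp: S_def)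
  have "\<phi> t \<le> \<phi> (Sup S)"
  proof (rule DERIV_nonpos_imp_decreasing_open[of "Sup S" t \<phi>])
    show "Sup S \<le> t" by (rule \<tau>(2))
    show "continuous_on {Sup S..t} \<phi>" using \<tau> by (intro continuous_on_subset[OF cont]) auto
    show "\<exists>y. (\<phi> has_real_derivative y) (at u) \<and> y \<le> 0" if "Sup S < u" "u < t" for u
      using deriv[of u] decreasing[of u] above[of u] that \<tau> \<open>c \<le> K\<close> by force
  qed
  then show False using \<tau> \<open>\<not> \<phi> t \<le> K\<close> by simp
qed

lemma deriv_le_neg_imp_reaches_level:
  fixes \<phi> \<phi>' :: "real \<Rightarrow> real"
  assumes cont: "continuous_on {T..} \<phi>"
    and deriv: "\<And>t. T < t \<Longrightarrow> (\<phi> has_real_derivative \<phi>' t) (at t)"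
    and decreasing: "\<And>t. T < t \<Longrightarrow> \<epsilon> < \<phi> t \<Longrightarrow> \<phi>' t \<le> - \<eta>"
    and "0 < \<eta>"
  shows "\<exists>T'\<ge>T. \<phi> T' \<le> \<epsilon>"
proof (rule ccontr)
  assume "\<not> (\<exists>T'\<ge>T. \<phi> T' \<le> \<epsilon>)"
  then have above: "\<epsilon> < \<phi> u" if "T \<le> u" for u using that by force
  define t where "t = T + (\<bar>\<phi> T - \<epsilon>\<bar> + 1) / \<eta>"
  have "T < t" using \<open>0 < \<eta>\<close> by (simp add: t_def add_pos_nonneg)
  have "\<phi> t + \<eta> * t \<le> \<phi> T + \<eta> * T"
  proof (rule DERIV_nonpos_imp_decreasing_open[where f = "\<lambda>u. \<phi> u + \<eta> * u"])
    show "T \<le> t" using \<open>T < t\<close> by simp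
    show "continuous_on {T..t} (\<lambda>u. \<phi> u + \<eta> * u)"
      by (intro continuous_intros continuous_on_subset[OF cont]) auto
    show "\<exists>y. ((\<lambda>u. \<phi> u + \<eta> * u) has_real_derivative y) (at u) \<and> y \<le> 0"
      if "T < u" "u < t" for u
      using deriv[of u] decreasing[of u] above[of u] that
      by (intro exI[of _ "\<phi>' u + \<eta>"]) (auto intro!: derivative_eq_intros)
  qed
  moreover have "\<eta> * (t - T) = \<bar>\<phi> T - \<epsilon>\<bar> + 1" using \<open>0 < \<eta>\<close> by (simp add: t_def)
  ultimately have "\<phi> t < \<epsilon>" by (simp add: algebra_simps)
  then show False using above[of t] \<open>T < t\<close> by simp
qed

lemma deriv_le_neg_imp_eventually_le:
  fixes \<phi> \<phi>' :: "real \<Rightarrow> real"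
  assumes cont: "continuous_on {T..} \<phi>"
    and deriv: "\<And>t. T < t \<Longrightarrow> (\<phi> has_real_derivative \<phi>' t) (at t)"
    and decreasing: "\<And>t. T < t \<Longrightarrow> \<epsilon> < \<phi> t \<Longrightarrow> \<phi>' t \<le> - \<eta>"
    and "0 < \<eta>"
  shows "\<forall>\<^sub>F t in at_top. \<phi> t \<le> \<epsilon>"
proof -
  obtain T' where "T \<le> T'" "\<phi> T' \<le> \<epsilon>"
    using deriv_le_neg_imp_reaches_level[OF assms] by blast
  have "\<phi> t \<le> \<epsilon>" if "T' \<le> t" for t
  proof (rule upper_bound_invariant[of T' \<phi> \<phi>' \<epsilon> \<epsilon> t])
    show "continuous_on {T'..} \<phi>" using \<open>T \<le> T'\<close> by (intro continuous_on_subset[OF cont]) auto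
    show "(\<phi> has_real_derivative \<phi>' u) (at u)" if "T' < u" for u
      using deriv that \<open>T \<le> T'\<close> by simp
    show "\<phi>' u < 0" if "T' < u" "\<epsilon> < \<phi> u" for u
      using decreasing[of u] that \<open>T \<le> T'\<close> \<open>0 < \<eta>\<close> by fastforce
  qed (use \<open>\<phi> T' \<le> \<epsilon>\<close> that in auto)
  then show ?thesis unfolding eventually_at_top_linorder by blast
qed

lemma tendsto_zero_of_deriv_eq_forcing:
  fixes y p :: "real \<Rightarrow> real"
  assumes cont: "continuous_on {0..} y"
    and deriv: "\<And>t. 0 < t \<Longrightarrow> (y has_real_derivative p t - \<kappa> * y t) (at t)"
    and "0 < \<kappa>" and forcing: "(p \<longlongrightarrow> 0) at_top" and nonneg: "\<And>t. 0 \<le> t \<Longrightarrow> 0 \<le> y t"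
  shows "(y \<longlongrightarrow> 0) at_top"
proof (rule tendstoI)
  fix e :: real
  assume "0 < e"
  then have "0 < \<kappa> * e / 4" using \<open>0 < \<kappa>\<close> by simp
  have "\<forall>\<^sub>F t in at_top. p t < \<kappa> * e / 4"
    using tendstoD[OF forcing \<open>0 < \<kappa> * e / 4\<close>] by eventually_elim (simp add: dist_real_def)
  then obtain T where T: "\<And>t. T \<le> t \<Longrightarrow> p t < \<kappa> * e / 4"
    by (auto simp: eventually_at_top_linorder)
  have "\<forall>\<^sub>F t in at_top. y t \<le> e / 2"
  proof (rule deriv_le_neg_imp_eventually_le[where T = "max T 0"])
    show "continuous_on {max T 0..} y" by (intro continuous_on_subset[OF cont]) auto
    show "(y has_real_derivative p t - \<kappa> * y t) (at t)" if "max T 0 < t" for t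
      using deriv that by simp
    show "p t - \<kappa> * y t \<le> - (\<kappa> * e / 4)" if "max T 0 < t" "e / 2 < y t" for t
      using T[of t] mult_strict_left_mono[OF that(2) \<open>0 < \<kappa>\<close>] that by simp
  qed (use \<open>0 < \<kappa> * e / 4\<close> in simp)
  moreover have "\<forall>\<^sub>F t in at_top. 0 \<le> y t"
    using nonneg by (auto simp: eventually_at_top_linorder)
  ultimately show "\<forall>\<^sub>F t in at_top. dist (y t) 0 < e"
    by eventually_elim (use \<open>0 < e\<close> in \<open>simp add: dist_real_def\<close>)
qed

subsection \<open>Interior equilibria\<close>

text \<open>The gap of a state \<open>(f, m)\<close> is \<open>1 - f - m\<close>; \<open>fhms_gap_const\<close> is the constant term \<open>P\<close>
  of the quadratic satisfied by the gap at interior equilibria.\<close>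

definition fhms_gap_const :: "real \<Rightarrow> real \<Rightarrow> real \<Rightarrow> real \<Rightarrow> real" where
  "fhms_gap_const r \<alpha> h s = (1 + h) / (r * \<alpha>) + (1 - s) / ((1 - r) * \<alpha>)"

definition fhms_equilibrium_of_gap :: "real \<Rightarrow> real \<Rightarrow> real \<Rightarrow> real \<Rightarrow> real \<Rightarrow> real \<times> real" where
  "fhms_equilibrium_of_gap r \<alpha> h s g = ((1 - s) / ((1 - r) * \<alpha> * g), (1 + h) / (r * \<alpha> * g))"

definition stocking_threshold :: "real \<Rightarrow> real \<Rightarrow> real \<Rightarrow> real" where
  "stocking_threshold r \<alpha> h = 1 / r + (1 - r) / 4 * (4 * h / r - \<alpha>)"

lemma fhms_field_factor:
  "fhms_field r \<alpha> h s (f, m) =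
     (f * (r * \<alpha> * m * (1 - f - m) - (1 + h)), m * ((1 - r) * \<alpha> * f * (1 - f - m) - (1 - s)))"
  by (simp add: fhms_field_def algebra_simps)

lemma interior_equilibrium_gap:
  assumes "0 < r" "r < 1" "0 < \<alpha>" "0 \<le> h"
    and "(f, m) \<in> interior_equilibria r \<alpha> h s"
  defines "g \<equiv> 1 - f - m"
  shows "0 < g" "g\<^sup>2 - g + fhms_gap_const r \<alpha> h s = 0"
    "(f, m) = fhms_equilibrium_of_gap r \<alpha> h s g"
proof -
  have "0 < f" "0 < m" and eqs: "r * \<alpha> * m * g = 1 + h" "(1 - r) * \<alpha> * f * g = 1 - s"
    using assms(5) by (auto simp: interior_equilibria_def fhms_field_factor g_def)
  have "0 < r * \<alpha> * m * g" using eqs(1) assms(4) by simp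
  moreover have "0 < r * \<alpha> * m" using assms(1,3) \<open>0 < m\<close> by simp
  ultimately show "0 < g" by (rule zero_less_mult_pos)
  have nz: "r \<noteq> 0" "1 - r \<noteq> 0" "\<alpha> \<noteq> 0" "g \<noteq> 0" using assms(1-3) \<open>0 < g\<close> by auto
  have "fhms_gap_const r \<alpha> h s = m * g + f * g"
    unfolding fhms_gap_const_def eqs[symmetric] using nz by simp
  then show "g\<^sup>2 - g + fhms_gap_const r \<alpha> h s = 0"
    by (simp add: g_def power2_eq_square algebra_simps)
  show "(f, m) = fhms_equilibrium_of_gap r \<alpha> h s g"
    unfolding fhms_equilibrium_of_gap_def eqs[symmetric] using nz by simp
qed

lemma fhms_equilibrium_of_gap_interior:
  assumes "0 < r" "r < 1" "0 < \<alpha>" "0 \<le> h" "s < 1"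
    and "0 < g" "g\<^sup>2 - g + fhms_gap_const r \<alpha> h s = 0"
  shows "fhms_equilibrium_of_gap r \<alpha> h s g \<in> interior_equilibria r \<alpha> h s"
proof -
  obtain f m where fm: "fhms_equilibrium_of_gap r \<alpha> h s g = (f, m)" by fastforce
  have nz: "r \<noteq> 0" "1 - r \<noteq> 0" "\<alpha> \<noteq> 0" "g \<noteq> 0" using assms by auto
  have f: "(1 - r) * \<alpha> * f * g = 1 - s" and m: "r * \<alpha> * m * g = 1 + h"
    using fm nz by (auto simp: fhms_equilibrium_of_gap_def)
  have "0 < f" "0 < m" using fm assms by (auto simp: fhms_equilibrium_of_gap_def)
  have "fhms_gap_const r \<alpha> h s = m * g + f * g"
    unfolding fhms_gap_const_def f[symmetric] m[symmetric] using nz by simp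
  then have "g * (1 - f - m) = g * g"
    using assms(7) by (simp add: power2_eq_square algebra_simps)
  then have "1 - f - m = g" using nz by simp
  then show ?thesis
    using fm f m \<open>0 < f\<close> \<open>0 < m\<close> by (simp add: interior_equilibria_def fhms_field_factor)
qed

lemma interior_equilibria_eq_image:
  assumes "0 < r" "r < 1" "0 < \<alpha>" "0 \<le> h" "s < 1"
  shows "interior_equilibria r \<alpha> h s =
    fhms_equilibrium_of_gap r \<alpha> h s ` {g. 0 < g \<and> g\<^sup>2 - g + fhms_gap_const r \<alpha> h s = 0}"
proof (intro subset_antisym subsetI)
  fix p assume "p \<in> interior_equilibria r \<alpha> h s"
  then show "p \<in> fhms_equilibrium_of_gap r \<alpha> h s ` {g. 0 < g \<and> g\<^sup>2 - g + fhms_gap_const r \<alpha> h s = 0}"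
    using interior_equilibrium_gap[OF assms(1-4), of "fst p" "snd p"] by (intro image_eqI) auto
qed (use fhms_equilibrium_of_gap_interior[OF assms] in auto)

lemma inj_on_fhms_equilibrium_of_gap:
  assumes "r < 1" "0 < \<alpha>" "s < 1"
  shows "inj_on (fhms_equilibrium_of_gap r \<alpha> h s) {0<..}"
  using assms by (auto simp: inj_on_def fhms_equilibrium_of_gap_def frac_eq_eq)

lemma fhms_discriminant:
  assumes "0 < r" "r < 1" "0 < \<alpha>"
  shows "1 - 4 * fhms_gap_const r \<alpha> h s = 4 * (s - stocking_threshold r \<alpha> h) / ((1 - r) * \<alpha>)"
  using assms by (simp add: fhms_gap_const_def stocking_threshold_def field_simps)

lemma fhms_gap_const_below_threshold:
  assumes "0 < r" "r < 1" "0 < \<alpha>" "s < stocking_threshold r \<alpha> h"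
  shows "1 < 4 * fhms_gap_const r \<alpha> h s"
proof -
  have "4 * (s - stocking_threshold r \<alpha> h) / ((1 - r) * \<alpha>) < 0"
    using assms by (intro divide_neg_pos) auto
  then show ?thesis using fhms_discriminant[OF assms(1-3), of h s] by simp
qed

lemma interior_equilibria_below_threshold:
  assumes "0 < r" "r < 1" "0 < \<alpha>" "0 \<le> h" "s < stocking_threshold r \<alpha> h"
  shows "interior_equilibria r \<alpha> h s = {}"
  using interior_equilibrium_gap(2)[OF assms(1-4)] quadratic_no_root
    fhms_gap_const_below_threshold[OF assms(1-3,5)] by fast

lemma fhms_gap_const_at_threshold:
  assumes "0 < r" "r < 1" "0 < \<alpha>"
  shows "4 * fhms_gap_const r \<alpha> h (stocking_threshold r \<alpha> h) = 1"
  using fhms_discriminant[OF assms, of h "stocking_threshold r \<alpha> h"] by simp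

lemma card_interior_equilibria_above_threshold:
  assumes "0 < r" "r < 1" "0 < \<alpha>" "0 \<le> h" "s < 1" "stocking_threshold r \<alpha> h < s"
  shows "card (interior_equilibria r \<alpha> h s) = 2"
proof -
  let ?roots = "{g. 0 < g \<and> g\<^sup>2 - g + fhms_gap_const r \<alpha> h s = 0}"
  have "0 < (1 + h) / (r * \<alpha>)" "0 < (1 - s) / ((1 - r) * \<alpha>)" using assms by simp_all
  then have "0 < fhms_gap_const r \<alpha> h s" by (simp add: fhms_gap_const_def)
  moreover have "4 * fhms_gap_const r \<alpha> h s < 1"
  proof -
    have "0 < 4 * (s - stocking_threshold r \<alpha> h) / ((1 - r) * \<alpha>)"
      using assms by (intro divide_pos_pos) auto
    then show ?thesis using fhms_discriminant[OF assms(1-3), of h s] by simp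
  qed
  ultimately have "card ?roots = 2" by (rule card_positive_roots_quadratic)
  moreover have "inj_on (fhms_equilibrium_of_gap r \<alpha> h s) ?roots"
    using inj_on_fhms_equilibrium_of_gap[OF assms(2,3,5)] by (rule inj_on_subset) auto
  ultimately show ?thesis using interior_equilibria_eq_image[OF assms(1-5)] by (simp add: card_image)
qed

lemma fhms_equilibrium_of_half_gap:
  assumes "0 < r" "r < 1" "0 < \<alpha>" "s < 1" "4 * fhms_gap_const r \<alpha> h s = 1"
  defines "\<mu> \<equiv> (1 - r) * (1 + h) / (r * (1 - s))"
  shows "fhms_equilibrium_of_gap r \<alpha> h s (1/2) = (1 / (2 * (1 + \<mu>)), \<mu> / (2 * (1 + \<mu>)))"
proof -
  obtain f m where fm: "fhms_equilibrium_of_gap r \<alpha> h s (1/2) = (f, m)" by fastforce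
  have nz: "r \<noteq> 0" "1 - r \<noteq> 0" "\<alpha> \<noteq> 0" "1 - s \<noteq> 0" using assms by auto
  have f: "f = 2 * (1 - s) / ((1 - r) * \<alpha>)" and m: "m = 2 * (1 + h) / (r * \<alpha>)"
    using fm by (auto simp: fhms_equilibrium_of_gap_def)
  have "f + m = 1/2" using assms(5) by (simp add: f m fhms_gap_const_def field_simps)
  moreover have "m = \<mu> * f"
    unfolding f m \<mu>_def using nz by (simp add: divide_simps) (simp add: algebra_simps)
  ultimately have "2 * (1 + \<mu>) * f = 1" by (simp add: algebra_simps)
  moreover have "1 + \<mu> \<noteq> 0" using calculation by (metis mult_zero_left mult_zero_right zero_neq_one)
  ultimately show ?thesis using fm \<open>m = \<mu> * f\<close> by (simp add: field_simps)
qed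

lemma interior_equilibria_at_threshold:
  assumes "0 < r" "r < 1" "0 < \<alpha>" "0 \<le> h" "s < 1" "s = stocking_threshold r \<alpha> h"
  defines "\<mu> \<equiv> (1 - r) * (1 + h) / (r * (1 - s))"
  shows "interior_equilibria r \<alpha> h s = {(1 / (2 * (1 + \<mu>)), \<mu> / (2 * (1 + \<mu>)))}"
proof -
  have "4 * fhms_gap_const r \<alpha> h s = 1" using fhms_gap_const_at_threshold[OF assms(1-3)] assms(6) by simp
  then have "{g. 0 < g \<and> g\<^sup>2 - g + fhms_gap_const r \<alpha> h s = 0} = {1/2}"
    and "fhms_equilibrium_of_gap r \<alpha> h s (1/2) = (1 / (2 * (1 + \<mu>)), \<mu> / (2 * (1 + \<mu>)))"
    using quadratic_double_root fhms_equilibrium_of_half_gap[OF assms(1-3,5)] by (auto simp: \<mu>_def)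
  then show ?thesis using interior_equilibria_eq_image[OF assms(1-5)] by simp
qed

lemma stocking_threshold_bounds:
  assumes "0 < r" "r < 1" "0 < \<alpha>"
    and "r / 4 * (\<alpha> - 4 / (r * (1 - r))) < h" "h < r / 4 * (\<alpha> - 4 / r)"
  shows "0 \<le> stocking_threshold r \<alpha> h" "stocking_threshold r \<alpha> h < 1"
proof -
  have nz: "r \<noteq> 0" "1 - r \<noteq> 0" using assms(1,2) by auto
  have "4 * r * (1 - stocking_threshold r \<alpha> h) = (1 - r) * (r * \<alpha> - 4 * (1 + h))"
    using nz by (simp add: stocking_threshold_def field_simps)
  moreover have "r / 4 * (\<alpha> - 4 / r) = r * \<alpha> / 4 - 1" using nz by (simp add: field_simps)
  then have "0 < r * \<alpha> - 4 * (1 + h)" using assms(5) by simp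
  ultimately have "0 < 4 * r * (1 - stocking_threshold r \<alpha> h)" using assms(2) by simp
  then show "stocking_threshold r \<alpha> h < 1" using assms(1) by (simp add: zero_less_mult_iff)
  have "4 * r * stocking_threshold r \<alpha> h = 4 - (1 - r) * (r * \<alpha> - 4 * h)"
    using nz by (simp add: stocking_threshold_def field_simps)
  moreover have "(1 - r) * (r * \<alpha> - 4 * h) < 4"
  proof -
    have "r / 4 * (\<alpha> - 4 / (r * (1 - r))) = r * \<alpha> / 4 - 1 / (1 - r)"
      using nz by (simp add: field_simps)
    then have "4 * (1 - r) * (r * \<alpha> / 4 - 1 / (1 - r)) < 4 * (1 - r) * h"
      using assms(2,4) by (intro mult_strict_left_mono) auto
    moreover have "4 * (1 - r) * (r * \<alpha> / 4 - 1 / (1 - r)) = (1 - r) * r * \<alpha> - 4"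
      using nz by (simp add: field_simps)
    ultimately show ?thesis by (simp add: algebra_simps)
  qed
  ultimately have "0 < 4 * r * stocking_threshold r \<alpha> h" by simp
  then show "0 \<le> stocking_threshold r \<alpha> h" using assms(1) by (simp add: zero_less_mult_iff)
qed

subsection \<open>The Jacobian\<close>

lemma fhms_jacobian_eq:
  "fhms_jacobian r \<alpha> h s (f, m) = mat 2 2 (\<lambda>(i, j).
     if i = 0 then
       (if j = 0 then r * \<alpha> * m * (1 - f - m) - r * \<alpha> * f * m - (1 + h)
        else r * \<alpha> * f * (1 - f - m) - r * \<alpha> * f * m)
     else
       (if j = 0 then (1 - r) * \<alpha> * m * (1 - f - m) - (1 - r) * \<alpha> * f * m
        else (1 - r) * \<alpha> * f * (1 - f - m) - (1 - r) * \<alpha> * f * m + (s - 1)))"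
proof -
  have "deriv (\<lambda>x. fst (fhms_field r \<alpha> h s (x, m))) f = r * \<alpha> * m * (1 - f - m) - r * \<alpha> * f * m - (1 + h)"
    "deriv (\<lambda>y. fst (fhms_field r \<alpha> h s (f, y))) m = r * \<alpha> * f * (1 - f - m) - r * \<alpha> * f * m"
    "deriv (\<lambda>x. snd (fhms_field r \<alpha> h s (x, m))) f = (1 - r) * \<alpha> * m * (1 - f - m) - (1 - r) * \<alpha> * f * m"
    "deriv (\<lambda>y. snd (fhms_field r \<alpha> h s (f, y))) m
       = (1 - r) * \<alpha> * f * (1 - f - m) - (1 - r) * \<alpha> * f * m + (s - 1)"
    by (simp_all add: fhms_field_def, (rule DERIV_imp_deriv, (rule derivative_eq_intros refl)+,
        simp add: algebra_simps)+)
  then show ?thesis unfolding fhms_jacobian_def by (intro eq_matI) auto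
qed

lemma det_carrier_mat_2:
  assumes "(A :: 'a :: comm_ring_1 mat) \<in> carrier_mat 2 2"
  shows "Determinant.det A = A $$ (0, 0) * A $$ (1, 1) - A $$ (0, 1) * A $$ (1, 0)"
proof -
  have "Determinant.det A = (\<Sum>j<2. A $$ (0, j) * cofactor A 0 j)"
    by (rule laplace_expansion_row[OF assms]) simp
  also have "\<dots> = A $$ (0, 0) * cofactor A 0 0 + A $$ (0, 1) * cofactor A 0 1"
    by (simp add: numeral_2_eq_2)
  also have "cofactor A 0 0 = A $$ (1, 1)"
    unfolding cofactor_def using assms by (subst det_single) (auto simp: mat_delete_def)
  also have "cofactor A 0 1 = - A $$ (1, 0)"
    unfolding cofactor_def using assms by (subst det_single) (auto simp: mat_delete_def)
  finally show ?thesis by simp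
qed

lemma char_poly_carrier_mat_2:
  assumes "(A :: 'a :: comm_ring_1 mat) \<in> carrier_mat 2 2"
  shows "char_poly A =
    [: A $$ (0, 0) * A $$ (1, 1) - A $$ (0, 1) * A $$ (1, 0), - (A $$ (0, 0) + A $$ (1, 1)), 1 :]"
  unfolding char_poly_def using assms
  by (subst det_carrier_mat_2) (simp_all add: char_poly_matrix_def)

lemma order_0_monic_quadratic:
  fixes b :: "'a :: idom"
  assumes "b \<noteq> 0"
  shows "order 0 [:0, b, 1:] = 1"
proof -
  have factor: "[:0, b, 1:] = [:0, 1:] * [:b, 1:]" by simp
  have "order 0 [:0, 1 :: 'a:] = 1" using order_power_n_n[of 0 1] by simp
  moreover have "order 0 [:b, 1:] = 0" using assms by (intro order_0I) simp
  ultimately show ?thesis unfolding factor by (subst order_mult) auto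
qed

lemma fhms_jacobian_simple_zero_eigenvalue:
  assumes "\<alpha> \<noteq> 0" "(f, m) \<in> interior_equilibria r \<alpha> h s" "f + m = 1/2"
  shows "order 0 (char_poly (fhms_jacobian r \<alpha> h s (f, m))) = 1"
proof -
  let ?J = "fhms_jacobian r \<alpha> h s (f, m)"
  have "0 < f" "0 < m"
    and "r * \<alpha> * m * (1 - f - m) = 1 + h" "(1 - r) * \<alpha> * f * (1 - f - m) = 1 - s"
    using assms(2) by (auto simp: interior_equilibria_def fhms_field_factor)
  moreover have gap: "1 - f - m = 1/2" using assms(3) by simp
  ultimately have eqs: "r * \<alpha> * m = 2 * (1 + h)" "(1 - r) * \<alpha> * f = 2 * (1 - s)" by simp_all
  have m: "m = 1/2 - f" and f: "f = 1/2 - m" using assms(3) by simp_all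
  have entries: "?J $$ (0, 0) = - (r * \<alpha> * f * m)" "?J $$ (1, 1) = - ((1 - r) * \<alpha> * f * m)"
    "?J $$ (0, 1) = r * \<alpha> * f * f" "?J $$ (1, 0) = (1 - r) * \<alpha> * m * m"
  proof -
    show "?J $$ (0, 0) = - (r * \<alpha> * f * m)" "?J $$ (1, 1) = - ((1 - r) * \<alpha> * f * m)"
      unfolding fhms_jacobian_eq gap using eqs by (simp_all add: algebra_simps)
    show "?J $$ (0, 1) = r * \<alpha> * f * f" unfolding fhms_jacobian_eq m by (simp add: field_simps)
    show "?J $$ (1, 0) = (1 - r) * \<alpha> * m * m" unfolding fhms_jacobian_eq f by (simp add: field_simps)
  qed
  have "char_poly ?J = [: ?J $$ (0, 0) * ?J $$ (1, 1) - ?J $$ (0, 1) * ?J $$ (1, 0),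
      - (?J $$ (0, 0) + ?J $$ (1, 1)), 1 :]"
    by (rule char_poly_carrier_mat_2) (simp add: fhms_jacobian_eq)
  also have "\<dots> = [:0, \<alpha> * f * m, 1:]" unfolding entries by (simp add: algebra_simps)
  finally show ?thesis using assms(1) \<open>0 < f\<close> \<open>0 < m\<close> by (simp add: order_0_monic_quadratic)
qed

lemma fhms_jacobian_at_threshold:
  assumes "0 < r" "r < 1" "0 < \<alpha>" "0 \<le> h" "s = stocking_threshold r \<alpha> h"
    and "(f, m) \<in> interior_equilibria r \<alpha> h s"
  shows "order 0 (char_poly (fhms_jacobian r \<alpha> h s (f, m))) = 1"
proof -
  have "4 * fhms_gap_const r \<alpha> h s = 1" using fhms_gap_const_at_threshold[OF assms(1-3)] assms(5) by simp
  then have "1 - f - m = 1/2"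
    using interior_equilibrium_gap(2)[OF assms(1-4,6)] quadratic_double_root by blast
  then show ?thesis using assms(3,6) by (intro fhms_jacobian_simple_zero_eigenvalue) auto
qed

subsection \<open>Extinction below the threshold\<close>

lemma weighted_mortality_below_threshold:
  assumes "0 < r" "r < 1" "0 < \<alpha>" "s < stocking_threshold r \<alpha> h"
  shows "\<alpha> / 4 < (1 + h) / r + (1 - s) / (1 - r)"
proof -
  have "1/4 < fhms_gap_const r \<alpha> h s" using fhms_gap_const_below_threshold[OF assms] by simp
  then have "\<alpha> * (1/4) < \<alpha> * fhms_gap_const r \<alpha> h s" using assms(3) by (rule mult_strict_left_mono)
  moreover have "\<alpha> * fhms_gap_const r \<alpha> h s = (1 + h) / r + (1 - s) / (1 - r)"
    using assms(1-3) by (simp add: fhms_gap_const_def field_simps)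
  ultimately show ?thesis by simp
qed

locale fhms_solution =
  fixes r \<alpha> h s :: real and x :: "real \<Rightarrow> real \<times> real"
  assumes ratio: "0 < r" "r < 1" and \<alpha>_pos: "0 < \<alpha>" and harvest: "0 \<le> h" and stocking: "s < 1"
    and initial_nonneg: "0 \<le> fst (x 0)" "0 \<le> snd (x 0)"
    and solution:
      "\<And>t. 0 \<le> t \<Longrightarrow> (x has_vector_derivative fhms_field r \<alpha> h s (x t)) (at t within {0..})"
begin

definition female :: "real \<Rightarrow> real" where
  "female = (\<lambda>t. fst (x t))"

definition male :: "real \<Rightarrow> real" where
  "male = (\<lambda>t. snd (x t))"

definition female_growth_rate :: "real \<Rightarrow> real" where
  "female_growth_rate = (\<lambda>t. r * \<alpha> * male t * (1 - female t - male t) - (1 + h))"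

definition male_growth_rate :: "real \<Rightarrow> real" where
  "male_growth_rate = (\<lambda>t. (1 - r) * \<alpha> * female t * (1 - female t - male t) - (1 - s))"

definition total_bound :: real where
  "total_bound = max (female 0 + male 0) 1"

lemma continuous_on_female: "continuous_on {0..} female"
  and continuous_on_male: "continuous_on {0..} male"
proof -
  have "continuous_on {0..} x"
    using solution by (auto simp: continuous_on_eq_continuous_within intro: has_vector_derivative_continuous)
  then show "continuous_on {0..} female" "continuous_on {0..} male"
    unfolding female_def male_def by (auto intro!: continuous_on_fst continuous_on_snd)
qed

lemma continuous_on_female_growth_rate: "continuous_on {0..} female_growth_rate"
  and continuous_on_male_growth_rate: "continuous_on {0..} male_growth_rate"
  unfolding female_growth_rate_def male_growth_rate_def
  by (intro continuous_intros continuous_on_female continuous_on_male)+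

lemma female_has_derivative: "(female has_real_derivative female t * female_growth_rate t) (at t)"
  and male_has_derivative: "(male has_real_derivative male t * male_growth_rate t) (at t)"
  if "0 < t"
proof -
  have "at t within {0..} = at t" using that by (intro at_within_interior) simp
  then have "(x has_vector_derivative fhms_field r \<alpha> h s (x t)) (at t)"
    using solution[of t] that by simp
  note derivs = has_vector_derivative_fst[OF this] has_vector_derivative_snd[OF this]
  show "(female has_real_derivative female t * female_growth_rate t) (at t)"
    "(male has_real_derivative male t * male_growth_rate t) (at t)"
    using derivs by (cases "x t";
      simp add: female_def male_def female_growth_rate_def male_growth_rate_def fhms_field_factor)+
qed

lemma female_eq_exp_integral: "female t = female 0 * exp (integral {0..t} female_growth_rate)"
  and male_eq_exp_integral: "male t = male 0 * exp (integral {0..t} male_growth_rate)"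
  if "0 \<le> t"
  using linear_ode_exp_integral[OF continuous_on_female continuous_on_female_growth_rate
      female_has_derivative that]
    linear_ode_exp_integral[OF continuous_on_male continuous_on_male_growth_rate
      male_has_derivative that]
  by auto

lemma female_nonneg: "0 \<le> female t" and male_nonneg: "0 \<le> male t" if "0 \<le> t"
  using female_eq_exp_integral[OF that] male_eq_exp_integral[OF that] initial_nonneg
  by (simp_all add: female_def male_def)

lemma female_add_male_le: "female t + male t \<le> total_bound" if "0 \<le> t"
proof (rule upper_bound_invariant[of 0 "\<lambda>t. female t + male t"
      "\<lambda>t. female t * female_growth_rate t + male t * male_growth_rate t" 1 total_bound t])
  show "continuous_on {0..} (\<lambda>t. female t + male t)"
    by (intro continuous_intros continuous_on_female continuous_on_male)
  show "((\<lambda>t. female t + male t) has_real_derivative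
      female t * female_growth_rate t + male t * male_growth_rate t) (at t)" if "0 < t" for t
    using female_has_derivative[OF that] male_has_derivative[OF that] by (rule DERIV_add)
  show "female t * female_growth_rate t + male t * male_growth_rate t < 0"
    if "0 < t" "1 < female t + male t" for t
  proof -
    have "female t * female_growth_rate t + male t * male_growth_rate t
        = \<alpha> * female t * male t * (1 - female t - male t) - ((1 + h) * female t + (1 - s) * male t)"
      by (simp add: female_growth_rate_def male_growth_rate_def algebra_simps)
    moreover have "\<alpha> * female t * male t * (1 - female t - male t) \<le> 0"
      using female_nonneg[of t] male_nonneg[of t] \<alpha>_pos that by (intro mult_nonneg_nonpos) auto
    moreover have "0 < (1 + h) * female t + (1 - s) * male t"
    proof (cases "0 < female t")
      case True
      then show ?thesis using harvest stocking male_nonneg[of t] that by (intro add_pos_nonneg) auto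
    next
      case False
      then have "0 < male t" using that by simp
      then show ?thesis using harvest stocking female_nonneg[of t] that by (intro add_nonneg_pos) auto
    qed
    ultimately show ?thesis by simp
  qed
qed (use that in \<open>auto simp: total_bound_def\<close>)

lemma weighted_growth_rate_le:
  "female_growth_rate t / r + male_growth_rate t / (1 - r)
     \<le> \<alpha> / 4 - ((1 + h) / r + (1 - s) / (1 - r))"
proof -
  let ?g = "1 - female t - male t"
  have "female_growth_rate t / r = \<alpha> * male t * ?g - (1 + h) / r"
    "male_growth_rate t / (1 - r) = \<alpha> * female t * ?g - (1 - s) / (1 - r)"
    using ratio by (simp_all add: female_growth_rate_def male_growth_rate_def diff_divide_distrib)
  moreover have "\<alpha> * male t * ?g + \<alpha> * female t * ?g = \<alpha> / 4 - \<alpha> * (female t + male t - 1/2)\<^sup>2"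
    by (simp add: power2_eq_square algebra_simps)
  moreover have "0 \<le> \<alpha> * (female t + male t - 1/2)\<^sup>2" using \<alpha>_pos by simp
  ultimately show ?thesis by simp
qed

lemma weighted_integral_growth_rate_le:
  assumes "0 \<le> t"
  shows "integral {0..t} female_growth_rate / r + integral {0..t} male_growth_rate / (1 - r)
    \<le> (\<alpha> / 4 - ((1 + h) / r + (1 - s) / (1 - r))) * t"
proof -
  define c where "c = \<alpha> / 4 - ((1 + h) / r + (1 - s) / (1 - r))"
  define \<psi> where "\<psi> u = integral {0..u} female_growth_rate / r
    + integral {0..u} male_growth_rate / (1 - r) - c * u" for u
  have "\<psi> t \<le> \<psi> 0"
  proof (rule DERIV_nonpos_imp_decreasing_open[of 0 t \<psi>])
    show "continuous_on {0..t} \<psi>" unfolding \<psi>_def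
      by (intro continuous_intros continuous_on_integral_atLeast[OF _ assms]
          continuous_on_female_growth_rate continuous_on_male_growth_rate) (use ratio in auto)
    show "\<exists>y. (\<psi> has_real_derivative y) (at u) \<and> y \<le> 0" if "0 < u" "u < t" for u
    proof (intro exI conjI)
      show "(\<psi> has_real_derivative female_growth_rate u / r + male_growth_rate u / (1 - r) - c) (at u)"
        unfolding \<psi>_def
        using integral_atLeast_has_real_derivative[OF continuous_on_female_growth_rate that(1)]
          integral_atLeast_has_real_derivative[OF continuous_on_male_growth_rate that(1)] ratio
        by (auto intro!: derivative_eq_intros)
      show "female_growth_rate u / r + male_growth_rate u / (1 - r) - c \<le> 0"
        using weighted_growth_rate_le[of u] by (simp add: c_def)
    qed
  qed (use assms in simp)
  then show ?thesis by (simp add: \<psi>_def c_def)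
qed

lemma integral_female_growth_rate_le:
  "integral {0..t} female_growth_rate \<le> ln (total_bound / female 0)"
  if "0 < female 0" "0 \<le> t"
proof -
  have "female 0 * exp (integral {0..t} female_growth_rate) \<le> total_bound"
    using female_eq_exp_integral[OF that(2)] female_add_male_le[OF that(2)] male_nonneg[OF that(2)]
    by simp
  then have "exp (integral {0..t} female_growth_rate) \<le> total_bound / female 0"
    using that(1) by (simp add: pos_le_divide_eq mult.commute)
  moreover have "0 < total_bound / female 0" using that(1) by (simp add: total_bound_def)
  ultimately show ?thesis by (simp add: ln_ge_iff)
qed

lemma integral_male_growth_rate_le:
  "integral {0..t} male_growth_rate \<le> ln (total_bound / male 0)"
  if "0 < male 0" "0 \<le> t"
proof -
  have "male 0 * exp (integral {0..t} male_growth_rate) \<le> total_bound"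
    using male_eq_exp_integral[OF that(2)] female_add_male_le[OF that(2)] female_nonneg[OF that(2)]
    by simp
  then have "exp (integral {0..t} male_growth_rate) \<le> total_bound / male 0"
    using that(1) by (simp add: pos_le_divide_eq mult.commute)
  moreover have "0 < total_bound / male 0" using that(1) by (simp add: total_bound_def)
  ultimately show ?thesis by (simp add: ln_ge_iff)
qed

lemma female_male_exp_bound:
  assumes "0 < female 0" "0 < male 0"
    and mortality: "\<alpha> / 4 < (1 + h) / r + (1 - s) / (1 - r)"
  obtains C \<kappa> where "0 < \<kappa>" "\<And>t. 0 \<le> t \<Longrightarrow> female t * male t \<le> C * exp (- \<kappa> * t)"
proof -
  define \<delta> where "\<delta> = (1 + h) / r + (1 - s) / (1 - r) - \<alpha> / 4"
  define a where "a = ln (total_bound / female 0)"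
  define b where "b = ln (total_bound / male 0)"
  define e where "e = 1 / r + 1 / (1 - r)"
  define Q where "Q = a / r + b / (1 - r)"
  have "0 < e" unfolding e_def using ratio by (intro add_pos_pos) auto
  have exponent: "integral {0..t} female_growth_rate + integral {0..t} male_growth_rate
      \<le> a + b + (- \<delta> * t - Q) / e" if "0 \<le> t" for t
  proof -
    let ?X = "integral {0..t} female_growth_rate - a" and ?Y = "integral {0..t} male_growth_rate - b"
    have "?X \<le> 0" "?Y \<le> 0"
      using integral_female_growth_rate_le[OF assms(1) that] integral_male_growth_rate_le[OF assms(2) that]
      by (simp_all add: a_def b_def)
    moreover have "1 / r * ?X + 1 / (1 - r) * ?Y \<le> - \<delta> * t - Q"
      using weighted_integral_growth_rate_le[OF that]
      by (simp add: \<delta>_def Q_def diff_divide_distrib algebra_simps)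
    ultimately have "e * (?X + ?Y) \<le> - \<delta> * t - Q"
      unfolding e_def using ratio by (intro sum_le_of_weighted_sum_le) auto
    then have "?X + ?Y \<le> (- \<delta> * t - Q) / e" using \<open>0 < e\<close> by (simp add: pos_le_divide_eq mult.commute)
    then show ?thesis by simp
  qed
  show ?thesis
  proof (rule that)
    show "0 < \<delta> / e" using mortality \<open>0 < e\<close> by (simp add: \<delta>_def)
    show "female t * male t \<le> female 0 * male 0 * exp (a + b - Q / e) * exp (- (\<delta> / e) * t)"
      if "0 \<le> t" for t
    proof -
      have "female t * male t
          = female 0 * male 0 * exp (integral {0..t} female_growth_rate + integral {0..t} male_growth_rate)"
        using female_eq_exp_integral[OF that] male_eq_exp_integral[OF that] by (simp add: exp_add)
      also have "\<dots> \<le> female 0 * male 0 * exp (a + b + (- \<delta> * t - Q) / e)"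
        using exponent[OF that] assms(1,2) by simp
      also have "exp (a + b + (- \<delta> * t - Q) / e) = exp (a + b - Q / e) * exp (- (\<delta> / e) * t)"
        by (simp add: exp_add[symmetric] diff_divide_distrib)
      finally show ?thesis by (simp add: mult.assoc)
    qed
  qed
qed

lemma female_male_tendsto_zero:
  assumes "\<alpha> / 4 < (1 + h) / r + (1 - s) / (1 - r)"
  shows "((\<lambda>t. female t * male t) \<longlongrightarrow> 0) at_top"
proof (cases "female 0 = 0 \<or> male 0 = 0")
  case True
  have "female t * male t = 0" if "0 \<le> t" for t
    using True female_eq_exp_integral[OF that] male_eq_exp_integral[OF that] by auto
  then have "\<forall>\<^sub>F t in at_top. female t * male t = 0"
    by (auto simp: eventually_at_top_linorder)
  then show ?thesis by (rule tendsto_eventually)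
next
  case False
  then have "0 < female 0" "0 < male 0" using female_nonneg[of 0] male_nonneg[of 0] by auto
  then obtain C \<kappa> where "0 < \<kappa>" and bound: "\<And>t. 0 \<le> t \<Longrightarrow> female t * male t \<le> C * exp (- \<kappa> * t)"
    using female_male_exp_bound[OF _ _ assms] by blast
  show ?thesis
  proof (rule Lim_null_comparison)
    show "\<forall>\<^sub>F t in at_top. norm (female t * male t) \<le> C * exp (- \<kappa> * t)"
      using bound female_nonneg male_nonneg by (auto simp: eventually_at_top_linorder intro!: exI[of _ 0])
    show "((\<lambda>t. C * exp (- \<kappa> * t)) \<longlongrightarrow> 0) at_top" using \<open>0 < \<kappa>\<close> by real_asymp
  qed
qed

lemma mating_term_tendsto_zero:
  assumes "\<alpha> / 4 < (1 + h) / r + (1 - s) / (1 - r)"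
  shows "((\<lambda>t. female t * male t * (1 - female t - male t)) \<longlongrightarrow> 0) at_top"
proof (rule Lim_null_comparison)
  show "\<forall>\<^sub>F t in at_top.
      norm (female t * male t * (1 - female t - male t)) \<le> (1 + total_bound) * (female t * male t)"
    unfolding eventually_at_top_linorder
  proof (intro exI allI impI)
    fix t :: real
    assume "0 \<le> t"
    then have "0 \<le> female t" "0 \<le> male t" "female t + male t \<le> total_bound"
      using female_nonneg male_nonneg female_add_male_le by auto
    moreover have "1 \<le> total_bound" by (simp add: total_bound_def)
    ultimately have "\<bar>1 - female t - male t\<bar> \<le> 1 + total_bound" by linarith
    then have "female t * male t * \<bar>1 - female t - male t\<bar> \<le> female t * male t * (1 + total_bound)"
      using \<open>0 \<le> female t\<close> \<open>0 \<le> male t\<close> by (intro mult_left_mono) auto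
    then show "norm (female t * male t * (1 - female t - male t)) \<le> (1 + total_bound) * (female t * male t)"
      using \<open>0 \<le> female t\<close> \<open>0 \<le> male t\<close> by (simp add: abs_mult mult.commute)
  qed
  show "((\<lambda>t. (1 + total_bound) * (female t * male t)) \<longlongrightarrow> 0) at_top"
    using tendsto_mult_right_zero[OF female_male_tendsto_zero[OF assms]] by simp
qed

lemma solution_tendsto_origin:
  assumes "\<alpha> / 4 < (1 + h) / r + (1 - s) / (1 - r)"
  shows "(x \<longlongrightarrow> (0, 0)) at_top"
proof -
  have forcing: "((\<lambda>t. c * (female t * male t * (1 - female t - male t))) \<longlongrightarrow> 0) at_top" for c
    using tendsto_mult_right_zero[OF mating_term_tendsto_zero[OF assms]] by simp
  have "(female \<longlongrightarrow> 0) at_top"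
  proof (rule tendsto_zero_of_deriv_eq_forcing[OF continuous_on_female _ _ forcing female_nonneg])
    show "(female has_real_derivative
        r * \<alpha> * (female t * male t * (1 - female t - male t)) - (1 + h) * female t) (at t)"
      if "0 < t" for t
      using female_has_derivative[OF that] by (simp add: female_growth_rate_def algebra_simps)
  qed (use harvest in simp)
  moreover have "(male \<longlongrightarrow> 0) at_top"
  proof (rule tendsto_zero_of_deriv_eq_forcing[OF continuous_on_male _ _ forcing male_nonneg])
    show "(male has_real_derivative
        (1 - r) * \<alpha> * (female t * male t * (1 - female t - male t)) - (1 - s) * male t) (at t)"
      if "0 < t" for t
      using male_has_derivative[OF that] by (simp add: male_growth_rate_def algebra_simps)
  qed (use stocking in simp)
  ultimately have "((\<lambda>t. (female t, male t)) \<longlongrightarrow> (0, 0)) at_top" by (rule tendsto_Pair)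
  then show ?thesis by (simp add: female_def male_def)
qed

end

theorem mainTheorem3:
  fixes r \<alpha> h :: real
  assumes hr: "0 < r" "r < 1"
    and h\<alpha>: "\<alpha> > 0"
    and hh: "h \<ge> 0"
    and hrange: "r / 4 * (\<alpha> - 4 / (r * (1 - r))) < h" "h < r / 4 * (\<alpha> - 4 / r)"
  defines "s_crit \<equiv> 1 / r + (1 - r) / 4 * (4 * h / r - \<alpha>)"
  defines "\<mu> \<equiv> (1 - r) * (1 + h) / (r * (1 - s_crit))"
  shows
    \<comment> \<open>s* is an admissible stocking rate\<close>
    "0 \<le> s_crit \<and> s_crit < 1
     \<comment> \<open>at s = s* the two interior equilibria coincide at E*\<close>
     \<and> interior_equilibria r \<alpha> h s_crit = {(1 / (2 * (1 + \<mu>)), \<mu> / (2 * (1 + \<mu>)))}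
     \<comment> \<open>the Jacobian at E* has a simple zero eigenvalue\<close>
     \<and> order 0 (char_poly (fhms_jacobian r \<alpha> h s_crit
                    (1 / (2 * (1 + \<mu>)), \<mu> / (2 * (1 + \<mu>))))) = 1
     \<comment> \<open>two interior equilibria for s slightly larger than s*\<close>
     \<and> (\<forall>\<^sub>F s in at_right s_crit. card (interior_equilibria r \<alpha> h s) = 2)
     \<comment> \<open>no interior equilibria for admissible s < s*\<close>
     \<and> (\<forall>s. 0 \<le> s \<and> s < s_crit \<longrightarrow> interior_equilibria r \<alpha> h s = {})
     \<comment> \<open>for admissible s < s*, all nonnegative solutions tend to (0,0)\<close>
     \<and> (\<forall>s x. 0 \<le> s \<and> s < s_crit \<and> fst (x 0) \<ge> 0 \<and> snd (x 0) \<ge> 0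
          \<and> (\<forall>t\<ge>0. (x has_vector_derivative fhms_field r \<alpha> h s (x t)) (at t within {0..}))
          \<longrightarrow> (x \<longlongrightarrow> (0, 0)) at_top)"
proof -
  have threshold: "s_crit = stocking_threshold r \<alpha> h" unfolding s_crit_def stocking_threshold_def ..
  have bounds: "0 \<le> s_crit" "s_crit < 1"
    using stocking_threshold_bounds[OF hr h\<alpha> hrange] threshold by auto
  have equilibria: "interior_equilibria r \<alpha> h s_crit = {(1 / (2 * (1 + \<mu>)), \<mu> / (2 * (1 + \<mu>)))}"
    using interior_equilibria_at_threshold[OF hr h\<alpha> hh bounds(2) threshold] unfolding \<mu>_def .
  then have jacobian: "order 0 (char_poly (fhms_jacobian r \<alpha> h s_crit
      (1 / (2 * (1 + \<mu>)), \<mu> / (2 * (1 + \<mu>))))) = 1"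
    using fhms_jacobian_at_threshold[OF hr h\<alpha> hh threshold] by blast
  have "\<forall>\<^sub>F s in at_right s_crit. card (interior_equilibria r \<alpha> h s) = 2"
    using card_interior_equilibria_above_threshold[OF hr h\<alpha> hh] threshold bounds(2)
    unfolding eventually_at_right[OF bounds(2)] by (intro exI[of _ 1]) auto
  moreover have "\<forall>s. 0 \<le> s \<and> s < s_crit \<longrightarrow> interior_equilibria r \<alpha> h s = {}"
    using interior_equilibria_below_threshold[OF hr h\<alpha> hh] threshold by blast
  moreover have "(x \<longlongrightarrow> (0, 0)) at_top"
    if "0 \<le> s \<and> s < s_crit \<and> fst (x 0) \<ge> 0 \<and> snd (x 0) \<ge> 0
      \<and> (\<forall>t\<ge>0. (x has_vector_derivative fhms_field r \<alpha> h s (x t)) (at t within {0..}))" for s x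
  proof -
    interpret fhms_solution r \<alpha> h s x using that hr h\<alpha> hh bounds by unfold_locales auto
    show ?thesis
      using weighted_mortality_below_threshold[OF hr h\<alpha>] that threshold by (intro solution_tendsto_origin) simp
  qed
  ultimately show ?thesis using bounds equilibria jacobian by blast
qed

end
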